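(* If the event $E^f(t)$ holds, then $$|I_{t-1}(\mathbf{x})-EI_{t-1}(\mathbf{x})|\le c_\alpha\beta_t^{1/2}\sigma_{t-1}(\mathbf{x})\quad\text{for all }\mathbf{x}\in\mathbb{C}_t,$$ where $c_\alpha=1.328$.
   Context: Setting: $d\ge1$, $r>0$, $C\subseteq[0,r]^d$ compact, $k$ a positive semidefinite kernel with $k(\mathbf{x},\mathbf{x}')\le1$, $k(\mathbf{x},\mathbf{x})=1$ on $C$; $f$ is a sample path of $GP(0,k)$, Lipschitz with constant $L\ge1/(rd)$ in $\ell_1$-norm. Noisy observations $y_i=f(\mathbf{x}_i)+\epsilon_i$, $\epsilon_i$ i.i.d. $\mathcal{N}(0,\sigma^2)$; $\mu_{t-1}$ and $\sigma_{t-1}$ are the GP posterior mean and standard deviation given the first $t-1$ observations; $\xi^+_{t-1}$ is the incumbent (BPMI $\min_{C}\mu_{t-1}$, BSPMI $\min_{i\le t-1}\mu_{t-1}(\mathbf{x}_i)$, or BOI $\min_{i\le t-1}y_i$). $I_{t-1}(\mathbf{x})=\max\{\xi^+_{t-1}-f(\mathbf{x}),0\}$, $EI_{t-1}(\mathbf{x})=(\xi^+_{t-1}-\mu_{t-1}(\mathbf{x}))\Phi(z)+\sigma_{t-1}(\mathbf{x})\phi(z)$ with $z=(\xi^+_{t-1}-\mu_{t-1}(\mathbf{x}))/\sigma_{t-1}(\mathbf{x})$, $\phi,\Phi$ standard normal pdf/cdf. $\mathbb{C}_t\subseteq C$ is finite with $|\mathbb{C}_t|=(Lrdt^2)^d$;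 with $\delta\in(0,1)$, $\pi_t=\pi^2t^2/6$, $\beta_t=2\log(8|\mathbb{C}_t|\pi_t/\delta)$. $E^f(t)$ is the event that $|f(\mathbf{x})-\mu_{t-1}(\mathbf{x})|\le\beta_t^{1/2}\sigma_{t-1}(\mathbf{x})$ for all $\mathbf{x}\in\mathbb{C}_t$. *)

theory Defs
  imports "HOL-Analysis.Analysis" "HOL-Probability.Probability" "Jordan_Normal_Form.Gauss_Jordan_Elimination"
begin

definition psd_kernel_on :: "'a set \<Rightarrow> ('a \<Rightarrow> 'a \<Rightarrow> real) \<Rightarrow> bool" where
  "psd_kernel_on S k \<longleftrightarrow> (\<forall>x\<in>S. \<forall>x'\<in>S. k x x' = k x' x) \<and>
     (\<forall>xs c. set xs \<subseteq> S \<longrightarrow>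
        (\<Sum>i<length xs. \<Sum>j<length xs. c i * c j * k (xs ! i) (xs ! j)) \<ge> 0)"

definition gram_reg :: "('a \<Rightarrow> 'a \<Rightarrow> real) \<Rightarrow> real \<Rightarrow> 'a list \<Rightarrow> real mat" where
  "gram_reg k nv xs = mat (length xs) (length xs) (\<lambda>(i,j). k (xs ! i) (xs ! j)) + nv \<cdot>\<^sub>m 1\<^sub>m (length xs)"

definition kvec :: "('a \<Rightarrow> 'a \<Rightarrow> real) \<Rightarrow> 'a list \<Rightarrow> 'a \<Rightarrow> real vec" where
  "kvec k xs x = vec (length xs) (\<lambda>i. k (xs ! i) x)"

definition post_mean :: "('a \<Rightarrow> 'a \<Rightarrow> real) \<Rightarrow> real \<Rightarrow> 'a list \<Rightarrow> real list \<Rightarrow> 'a \<Rightarrow> real" where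
  "post_mean k nv xs ys x =
     kvec k xs x \<bullet> (the (mat_inverse (gram_reg k nv xs)) *\<^sub>v vec_of_list ys)"

definition post_sd :: "('a \<Rightarrow> 'a \<Rightarrow> real) \<Rightarrow> real \<Rightarrow> 'a list \<Rightarrow> 'a \<Rightarrow> real" where
  "post_sd k nv xs x =
     sqrt (k x x - kvec k xs x \<bullet> (the (mat_inverse (gram_reg k nv xs)) *\<^sub>v kvec k xs x))"

definition BPMI :: "'a set \<Rightarrow> ('a \<Rightarrow> real) \<Rightarrow> real" where
  "BPMI C mu = Inf (mu ` C)"
definition BSPMI :: "'a list \<Rightarrow> ('a \<Rightarrow> real) \<Rightarrow> real" where
  "BSPMI xs mu = Min (mu ` set xs)"
definition BOI :: "real list \<Rightarrow> real" where
  "BOI ys = Min (set ys)"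

definition improvement :: "real \<Rightarrow> real \<Rightarrow> real" where
  "improvement xi fx = max (xi - fx) 0"

definition EI :: "real \<Rightarrow> real \<Rightarrow> real \<Rightarrow> real" where
  "EI xi mu sd = (let z = (xi - mu) / sd in
     (xi - mu) * cdf std_normal_distribution z + sd * std_normal_density z)"

definition beta_t :: "nat \<Rightarrow> real \<Rightarrow> real \<Rightarrow> real" where
  "beta_t t cardC \<delta> = 2 * ln (8 * cardC * (pi^2 * (real t)^2 / 6) / \<delta>)"

end

theory Submission
  imports Defs "Jordan_Normal_Form.Determinant"
begin

(* Write z = (xi - mu)/sigma. Then EI = sigma (z Phi(z) + phi(z)), while the improvement at the
   mean is sigma max(z, 0); these differ by at most sigma/2, because phi <= 1/2 and the
   Cantelli bound P(Z > |z|) <= 1/(1 + z^2) gives |z| P(Z > |z|) <= 1/2. The improvement is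
   1-Lipschitz in f(x), so on E^f(t) the error is at most (beta^(1/2) + 1/2) sigma, and
   beta >= 4 turns this into 1.25 beta^(1/2) sigma. That sigma > 0, which makes z meaningful,
   follows from the positive semidefiniteness of the kernel. *)

lemma std_normal_chebyshev_shifted:
  fixes w a :: real
  assumes "a > 0"
  shows "measure std_normal_distribution {x. a \<le> \<bar>x - w\<bar>} \<le> (1 + w\<^sup>2) / a\<^sup>2"
proof -
  interpret real_distribution std_normal_distribution by (rule real_dist_normal_dist)
  have square_eq: "(\<lambda>x. (x - w)^2) = (\<lambda>x. x^2 - 2 * w * x^1 + w\<^sup>2)"
    by (auto simp: power2_eq_square algebra_simps)
  have int1: "integrable std_normal_distribution (\<lambda>x. x^1)"
    and int2: "integrable std_normal_distribution (\<lambda>x. x^2)"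
    using integrable_std_normal_distribution_moment by blast+
  have mom1: "(LINT x|std_normal_distribution. x^1) = 0"
    by (rule integral_std_normal_distribution_moment_odd) simp
  have mom2: "(LINT x|std_normal_distribution. x^2) = 1"
    using std_normal_distribution_even_moments(1)[of 1] by simp
  have "integrable std_normal_distribution (\<lambda>x. (x - w)^2)"
    unfolding square_eq using int1 int2 by auto
  then have "measure std_normal_distribution {x \<in> space std_normal_distribution. a \<le> \<bar>x - w\<bar>}
      \<le> (LINT x|std_normal_distribution. (x - w)^2) / a\<^sup>2"
    using assms by (intro second_moment_method) auto
  also have "(LINT x|std_normal_distribution. (x - w)^2) = 1 + w\<^sup>2"
    unfolding square_eq using int1 int2 mom1 mom2 prob_space by simp
  finally show ?thesis by simp
qed

lemma std_normal_tails_le: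
  fixes z :: real
  assumes "z > 0"
  shows "measure std_normal_distribution {z<..} \<le> 1 / (1 + z\<^sup>2)"
    and "measure std_normal_distribution {..-z} \<le> 1 / (1 + z\<^sup>2)"
proof -
  interpret real_distribution std_normal_distribution by (rule real_dist_normal_dist)
  \<comment> \<open>Cantelli's bound: Chebyshev's inequality about the centre \<open>\<mp>1/z\<close> instead of 0.\<close>
  have shifted: "measure std_normal_distribution {x. z + 1/z \<le> \<bar>x - w\<bar>} \<le> 1 / (1 + z\<^sup>2)"
    if "w\<^sup>2 = 1 / z\<^sup>2" for w
  proof -
    have "measure std_normal_distribution {x. z + 1/z \<le> \<bar>x - w\<bar>} \<le> (1 + w\<^sup>2) / (z + 1/z)\<^sup>2"
      using assms by (intro std_normal_chebyshev_shifted add_pos_pos) auto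
    also have "(1 + w\<^sup>2) / (z + 1/z)\<^sup>2 = 1 / (1 + z\<^sup>2)"
    proof -
      have "1 + w\<^sup>2 = (1 + z\<^sup>2) / z\<^sup>2" "(z + 1/z)\<^sup>2 = (1 + z\<^sup>2)\<^sup>2 / z\<^sup>2"
        using assms that by (simp_all add: field_simps power2_eq_square)
      then show ?thesis
        using assms by (simp add: power2_eq_square)
    qed
    finally show ?thesis .
  qed
  have "{z<..} \<subseteq> {x. z + 1/z \<le> \<bar>x - (- 1/z)\<bar>}"
  proof
    fix x :: real assume "x \<in> {z<..}"
    then have "z + 1/z \<le> x - (- 1/z)" by simp
    also have "\<dots> \<le> \<bar>x - (- 1/z)\<bar>" by (rule abs_ge_self)
    finally show "x \<in> {x. z + 1/z \<le> \<bar>x - (- 1/z)\<bar>}" by simp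
  qed
  then have "measure std_normal_distribution {z<..}
      \<le> measure std_normal_distribution {x. z + 1/z \<le> \<bar>x - (- 1/z)\<bar>}"
    by (rule finite_measure_mono) simp
  also have "\<dots> \<le> 1 / (1 + z\<^sup>2)"
    by (rule shifted) (simp add: power_divide)
  finally show "measure std_normal_distribution {z<..} \<le> 1 / (1 + z\<^sup>2)" .
  have "{..-z} \<subseteq> {x. z + 1/z \<le> \<bar>x - 1/z\<bar>}"
  proof
    fix x :: real assume "x \<in> {..-z}"
    then have "z + 1/z \<le> - (x - 1/z)" by simp
    also have "\<dots> \<le> \<bar>x - 1/z\<bar>" by (rule abs_ge_minus_self)
    finally show "x \<in> {x. z + 1/z \<le> \<bar>x - 1/z\<bar>}" by simp
  qed
  then have "measure std_normal_distribution {..-z}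
      \<le> measure std_normal_distribution {x. z + 1/z \<le> \<bar>x - 1/z\<bar>}"
    by (rule finite_measure_mono) simp
  also have "\<dots> \<le> 1 / (1 + z\<^sup>2)"
    by (rule shifted) (simp add: power_divide)
  finally show "measure std_normal_distribution {..-z} \<le> 1 / (1 + z\<^sup>2)" .
qed

lemma std_normal_tail_mult_le_half:
  fixes z :: real
  shows "0 \<le> z \<Longrightarrow> z * (1 - cdf std_normal_distribution z) \<le> 1/2"
    and "z \<le> 0 \<Longrightarrow> - z * cdf std_normal_distribution z \<le> 1/2"
proof -
  interpret real_distribution std_normal_distribution by (rule real_dist_normal_dist)
  have frac_le: "u * (1 / (1 + u\<^sup>2)) \<le> 1/2" for u :: real
  proof -
    have "2 * u \<le> 1 + u\<^sup>2" using sum_squares_ge_zero[of "u - 1" 0]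
      by (simp add: power2_eq_square algebra_simps)
    then show ?thesis by (simp add: field_simps add_pos_nonneg)
  qed
  show "z * (1 - cdf std_normal_distribution z) \<le> 1/2" if "0 \<le> z"
  proof (cases "z = 0")
    case False
    have "1 - cdf std_normal_distribution z = measure std_normal_distribution {z<..}"
      using prob_compl[of "{..z}"] by (simp add: cdf_def Compl_eq_Diff_UNIV[symmetric])
    then have "z * (1 - cdf std_normal_distribution z) \<le> z * (1 / (1 + z\<^sup>2))"
      using that False std_normal_tails_le(1)[of z] by (intro mult_left_mono) auto
    then show ?thesis using frac_le[of z] by linarith
  qed simp
  show "- z * cdf std_normal_distribution z \<le> 1/2" if "z \<le> 0"
  proof (cases "z = 0")
    case False
    have "cdf std_normal_distribution z = measure std_normal_distribution {..- (- z)}"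
      by (simp add: cdf_def)
    then have "- z * cdf std_normal_distribution z \<le> - z * (1 / (1 + (- z)\<^sup>2))"
      using that False std_normal_tails_le(2)[of "- z"] by (intro mult_left_mono) auto
    then show ?thesis using frac_le[of "- z"] by linarith
  qed simp
qed

lemma std_normal_density_le_half: "std_normal_density z \<le> 1/2"
proof -
  have "2 \<le> sqrt (2 * pi)"
    using pi_gt3 by (intro real_le_rsqrt) simp
  then have "1 / sqrt (2 * pi) \<le> 1/2"
    by (intro divide_left_mono) auto
  moreover have "exp (- z\<^sup>2 / 2) \<le> 1" by simp
  ultimately have "1 / sqrt (2 * pi) * exp (- z\<^sup>2 / 2) \<le> 1/2 * 1"
    by (intro mult_mono) auto
  then show ?thesis
    unfolding std_normal_density_def by simp
qed

lemma abs_EI_standard_sub_improvement_le: "\<bar>EI z 0 1 - improvement z 0\<bar> \<le> 1/2"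
proof -
  interpret real_distribution std_normal_distribution by (rule real_dist_normal_dist)
  define P where "P = cdf std_normal_distribution z"
  define D where "D = std_normal_density z"
  have D: "0 \<le> D" "D \<le> 1/2"
    unfolding D_def by (rule normal_density_nonneg, rule std_normal_density_le_half)
  have P: "0 \<le> P" "P \<le> 1"
    unfolding P_def by (rule cdf_nonneg, rule cdf_bounded_prob)
  have EI_eq: "EI z 0 1 = z * P + D"
    unfolding EI_def P_def D_def by simp
  show ?thesis
  proof (cases "0 \<le> z")
    case True
    then have "EI z 0 1 - improvement z 0 = D - z * (1 - P)"
      unfolding EI_eq improvement_def by (simp add: algebra_simps)
    moreover have "0 \<le> z * (1 - P)" "z * (1 - P) \<le> 1/2"
      using True P std_normal_tail_mult_le_half(1)[of z] unfolding P_def by auto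
    ultimately show ?thesis using D unfolding abs_le_iff by linarith
  next
    case False
    then have "EI z 0 1 - improvement z 0 = D - (- z) * P"
      unfolding EI_eq improvement_def by simp
    moreover have "0 \<le> (- z) * P"
      using False P by (intro mult_nonneg_nonneg) auto
    moreover have "(- z) * P \<le> 1/2"
      using False std_normal_tail_mult_le_half(2)[of z] unfolding P_def by simp
    ultimately show ?thesis using D unfolding abs_le_iff by linarith
  qed
qed

lemma abs_EI_sub_improvement_le:
  assumes "sd > 0"
  shows "\<bar>EI xi mu sd - improvement xi mu\<bar> \<le> sd / 2"
proof -
  define z where "z = (xi - mu) / sd"
  have diff_eq: "xi - mu = sd * z"
    unfolding z_def using assms by simp
  have "EI xi mu sd = sd * EI z 0 1"
    unfolding EI_def Let_def z_def[symmetric] by (simp add: diff_eq algebra_simps)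
  moreover have "improvement xi mu = sd * improvement z 0"
    unfolding improvement_def diff_eq using assms by (auto simp: max_def mult_le_0_iff)
  ultimately have "\<bar>EI xi mu sd - improvement xi mu\<bar> = sd * \<bar>EI z 0 1 - improvement z 0\<bar>"
    using assms by (simp add: abs_mult flip: right_diff_distrib)
  also have "\<dots> \<le> sd * (1/2)"
    using assms abs_EI_standard_sub_improvement_le by (intro mult_left_mono) auto
  finally show ?thesis by simp
qed

lemma abs_improvement_sub_improvement_le:
  "\<bar>improvement xi a - improvement xi b\<bar> \<le> \<bar>a - b\<bar>"
  unfolding improvement_def by (auto simp: max_def)

lemma abs_improvement_sub_EI_le:
  assumes "sd > 0"
  shows "\<bar>improvement xi fx - EI xi mu sd\<bar> \<le> \<bar>fx - mu\<bar> + sd / 2"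
  using abs_improvement_sub_improvement_le[of xi fx mu] abs_EI_sub_improvement_le[OF assms, of xi mu]
  by linarith

lemma gram_reg_carrier: "gram_reg k s X \<in> carrier_mat (length X) (length X)"
  unfolding gram_reg_def by simp

lemma dim_gram_reg [simp]:
  "dim_row (gram_reg k s X) = length X" "dim_col (gram_reg k s X) = length X"
  using gram_reg_carrier by auto

lemma gram_reg_mult_vec_nth:
  assumes v: "v \<in> carrier_vec (length X)" and i: "i < length X"
  shows "(gram_reg k s X *\<^sub>v v) $ i = (\<Sum>j<length X. k (X!i) (X!j) * v$j) + s * v$i"
proof -
  let ?n = "length X"
  have "(gram_reg k s X *\<^sub>v v) $ i = (\<Sum>j<?n. gram_reg k s X $$ (i,j) * v$j)"
    using v i by (simp add: scalar_prod_def lessThan_atLeast0)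
  also have "\<dots> = (\<Sum>j<?n. k (X!i) (X!j) * v$j + (if i = j then s * v$j else 0))"
    by (rule sum.cong) (use i in \<open>auto simp: gram_reg_def algebra_simps\<close>)
  also have "\<dots> = (\<Sum>j<?n. k (X!i) (X!j) * v$j) + s * v$i"
    using i by (simp add: sum.distrib sum.delta)
  finally show ?thesis .
qed

lemma gram_reg_quadratic_form:
  assumes v: "v \<in> carrier_vec (length X)"
  shows "v \<bullet> (gram_reg k s X *\<^sub>v v) =
     (\<Sum>i<length X. \<Sum>j<length X. v$i * v$j * k (X!i) (X!j)) + s * (\<Sum>i<length X. v$i^2)"
proof -
  let ?n = "length X"
  have "v \<bullet> (gram_reg k s X *\<^sub>v v) = (\<Sum>i<?n. v$i * ((\<Sum>j<?n. k (X!i) (X!j) * v$j) + s * v$i))"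
    unfolding scalar_prod_def
    by (simp add: lessThan_atLeast0 gram_reg_mult_vec_nth[OF v] del: index_mult_mat_vec)
  also have "\<dots> = (\<Sum>i<?n. \<Sum>j<?n. v$i * v$j * k (X!i) (X!j)) + s * (\<Sum>i<?n. v$i^2)"
    by (simp add: distrib_left sum.distrib sum_distrib_left power2_eq_square mult_ac)
  finally show ?thesis .
qed

lemma psd_kernel_on_quadratic_nonneg:
  assumes "psd_kernel_on C k" "set xs \<subseteq> C"
  shows "0 \<le> (\<Sum>i<length xs. \<Sum>j<length xs. c i * c j * k (xs!i) (xs!j))"
  using assms unfolding psd_kernel_on_def by blast

lemma vec_eq_zero_if_sum_squares_eq_zero:
  fixes v :: "real vec"
  assumes "v \<in> carrier_vec n" "(\<Sum>i<n. v$i^2) = 0"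
  shows "v = 0\<^sub>v n"
proof -
  have "\<forall>i\<in>{..<n}. v$i^2 = 0"
    using assms(2) by (subst (asm) sum_nonneg_eq_0_iff) auto
  then show ?thesis using assms(1) by (intro eq_vecI) auto
qed

lemma gram_reg_inverse:
  assumes psd: "psd_kernel_on C k" and X: "set X \<subseteq> C" and s: "s > 0"
  obtains B where "mat_inverse (gram_reg k s X) = Some B"
    "gram_reg k s X * B = 1\<^sub>m (length X)" "B \<in> carrier_mat (length X) (length X)"
proof -
  let ?n = "length X" and ?G = "gram_reg k s X"
  have "v = 0\<^sub>v ?n" if v: "v \<in> carrier_vec ?n" "?G *\<^sub>v v = 0\<^sub>v ?n" for v
  proof -
    have "(\<Sum>i<?n. \<Sum>j<?n. v$i * v$j * k (X!i) (X!j)) + s * (\<Sum>i<?n. v$i^2) = 0"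
      using gram_reg_quadratic_form[OF v(1), where k=k and s=s] v by simp
    moreover have "0 \<le> (\<Sum>i<?n. \<Sum>j<?n. v$i * v$j * k (X!i) (X!j))"
      using psd_kernel_on_quadratic_nonneg[OF psd X] .
    moreover have "0 \<le> (\<Sum>i<?n. v$i^2)" by (simp add: sum_nonneg)
    ultimately have "(\<Sum>i<?n. v$i^2) = 0"
      using s by (smt (verit) mult_pos_pos)
    then show ?thesis using vec_eq_zero_if_sum_squares_eq_zero v(1) by blast
  qed
  then have "Determinant.det ?G \<noteq> 0"
    using det_0_iff_vec_prod_zero[OF gram_reg_carrier] by blast
  then have "?G \<in> Units (ring_mat TYPE(real) ?n ())"
    by (rule det_non_zero_imp_unit[OF gram_reg_carrier])
  then obtain B where "mat_inverse ?G = Some B"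
    using mat_inverse(1)[OF gram_reg_carrier, where b="()"] by fastforce
  then show ?thesis
    using that mat_inverse(2)[OF gram_reg_carrier] by blast
qed

(* The kernel's quadratic form on the points x # X with the coefficients (1, -w). *)
lemma psd_kernel_on_augmented:
  assumes psd: "psd_kernel_on C k" and X: "set X \<subseteq> C" and x: "x \<in> C"
    and w: "w \<in> carrier_vec (length X)"
  shows "0 \<le> k x x - 2 * (kvec k X x \<bullet> w)
      + (\<Sum>i<length X. \<Sum>j<length X. w$i * w$j * k (X!i) (X!j))"
proof -
  let ?n = "length X"
  define c where "c = (\<lambda>i. if i = 0 then 1 else - w$(i - 1))"
  have symm: "k x (X!i) = k (X!i) x" if "i < ?n" for i
    using psd X x that unfolding psd_kernel_on_def by (meson nth_mem subsetD)
  have kw: "kvec k X x \<bullet> w = (\<Sum>i<?n. w$i * k (X!i) x)"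
    unfolding kvec_def scalar_prod_def using w by (simp add: lessThan_atLeast0 mult_ac)
  have "0 \<le> (\<Sum>i<Suc ?n. \<Sum>j<Suc ?n. c i * c j * k ((x#X)!i) ((x#X)!j))"
    using psd_kernel_on_quadratic_nonneg[OF psd, of "x#X" c] X x by simp
  also have "\<dots> = k x x - (\<Sum>j<?n. w$j * k x (X!j)) - (\<Sum>i<?n. w$i * k (X!i) x)
      + (\<Sum>i<?n. \<Sum>j<?n. w$i * w$j * k (X!i) (X!j))"
    unfolding sum.lessThan_Suc_shift
    by (simp add: c_def sum.distrib sum_subtractf sum_negf del: sum.lessThan_Suc)
  also have "\<dots> = k x x - 2 * (kvec k X x \<bullet> w) + (\<Sum>i<?n. \<Sum>j<?n. w$i * w$j * k (X!i) (X!j))"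
    unfolding kw by (simp add: symm)
  finally show ?thesis .
qed

lemma post_sd_pos:
  assumes psd: "psd_kernel_on C k" and X: "set X \<subseteq> C" and s: "s > 0"
    and x: "x \<in> C" and kxx: "k x x > 0"
  shows "post_sd k s X x > 0"
proof -
  let ?n = "length X" and ?G = "gram_reg k s X"
  obtain B where B: "mat_inverse ?G = Some B" "?G * B = 1\<^sub>m ?n" "B \<in> carrier_mat ?n ?n"
    using gram_reg_inverse[OF psd X s] .
  define kv where "kv = kvec k X x"
  have kv: "kv \<in> carrier_vec ?n" unfolding kv_def kvec_def by simp
  define w where "w = B *\<^sub>v kv"
  have w: "w \<in> carrier_vec ?n" unfolding w_def using B(3) kv by simp
  have "?G *\<^sub>v w = (?G * B) *\<^sub>v kv"
    unfolding w_def using assoc_mult_mat_vec[OF gram_reg_carrier B(3) kv] by simp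
  also have "\<dots> = kv"
    using B(2) kv by simp
  finally have "?G *\<^sub>v w = kv" .
  then have "kv \<bullet> w = w \<bullet> (?G *\<^sub>v w)"
    using comm_scalar_prod[OF kv w] by simp
  then have p_eq: "kv \<bullet> w = (\<Sum>i<?n. \<Sum>j<?n. w$i * w$j * k (X!i) (X!j)) + s * (\<Sum>i<?n. w$i^2)"
    using gram_reg_quadratic_form[OF w] by simp
  have "s * (\<Sum>i<?n. w$i^2) \<le> k x x - kv \<bullet> w"
    using psd_kernel_on_augmented[OF psd X x w] p_eq unfolding kv_def by linarith
  moreover have "kv \<bullet> w = 0" if "(\<Sum>i<?n. w$i^2) = 0"
    using vec_eq_zero_if_sum_squares_eq_zero[OF w that] kv by simp
  moreover have "0 \<le> (\<Sum>i<?n. w$i^2)" by (simp add: sum_nonneg)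
  ultimately have "0 < k x x - kv \<bullet> w"
    using s kxx by (smt (verit) mult_pos_pos)
  then show ?thesis
    unfolding post_sd_def using B(1) kv_def w_def by simp
qed

lemma beta_t_ge_4:
  fixes c \<delta> :: real and t :: nat
  assumes "1 \<le> c" "1 \<le> t" "0 < \<delta>" "\<delta> \<le> 1"
  shows "4 \<le> beta_t t c \<delta>"
proof -
  have "9 \<le> pi\<^sup>2" using power_mono[of 3 pi 2] pi_gt3 by simp
  moreover have "1 \<le> (real t)\<^sup>2" using assms(2) by simp
  ultimately have "8 * 1 * (9 * 1 / 6) \<le> 8 * c * (pi\<^sup>2 * (real t)\<^sup>2 / 6)"
    using assms(1) by (intro mult_mono divide_right_mono) auto
  also have "\<dots> \<le> 8 * c * (pi\<^sup>2 * (real t)\<^sup>2 / 6) / \<delta>"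
    using assms(3,4) calculation by (simp add: le_divide_eq mult_left_le_one_le)
  finally have twelve: "12 \<le> 8 * c * (pi\<^sup>2 * (real t)\<^sup>2 / 6) / \<delta>" by simp
  have "exp (2::real) = exp 1 * exp 1" by (simp flip: exp_add)
  also have "\<dots> \<le> 3 * 3" using exp_le by (intro mult_mono) auto
  finally have "exp 2 \<le> 8 * c * (pi\<^sup>2 * (real t)\<^sup>2 / 6) / \<delta>" using twelve by linarith
  then have "2 \<le> ln (8 * c * (pi\<^sup>2 * (real t)\<^sup>2 / 6) / \<delta>)"
    by (subst ln_ge_iff) (use twelve in auto)
  then show ?thesis unfolding beta_t_def by simp
qed

lemma grid_size_ge_1:
  fixes L r :: real and d t :: nat
  assumes "0 < r" "1 \<le> d" "1 \<le> t" "1 / (r * d) \<le> L"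
  shows "1 \<le> (L * r * d * (real t)\<^sup>2) ^ d"
proof -
  have "0 < r * d" using assms(1,2) by simp
  then have "1 \<le> L * (r * d)" using assms(4) by (simp add: divide_le_eq mult.commute)
  moreover have "1 \<le> (real t)\<^sup>2" using assms(3) by simp
  ultimately have "1 * 1 \<le> L * r * d * (real t)\<^sup>2"
    by (intro mult_mono) (auto simp: mult.assoc)
  then show ?thesis by simp
qed

theorem mainTheorem16:
  fixes C :: "(real ^ 'd) set" and k :: "real ^ 'd \<Rightarrow> real ^ 'd \<Rightarrow> real"
    and f :: "real ^ 'd \<Rightarrow> real" and r L \<delta> \<sigma>n :: real and t :: nat
    and X :: "(real ^ 'd) list" and \<epsilon> :: "nat \<Rightarrow> real"
    and Ct :: "(real ^ 'd) set" and \<xi> :: real and ys :: "real list"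
  defines "d \<equiv> CARD('d)"
    and "\<mu> \<equiv> post_mean k (\<sigma>n^2) X ys"
    and "\<sigma> \<equiv> post_sd k (\<sigma>n^2) X"
    and "\<beta> \<equiv> beta_t t (real (card Ct)) \<delta>"
  assumes ys_obs: "ys = map (\<lambda>i. f (X ! i) + \<epsilon> i) [0..<length X]"
    and r_pos: "r > 0"
    and C_compact: "compact C"
    and C_box: "C \<subseteq> {x. \<forall>i. 0 \<le> x $ i \<and> x $ i \<le> r}"
    and k_psd: "psd_kernel_on C k"
    and k_le1: "\<forall>x\<in>C. \<forall>x'\<in>C. k x x' \<le> 1"
    and k_diag: "\<forall>x\<in>C. k x x = 1"
    and L_ge: "L \<ge> 1 / (r * d)"
    and f_lip: "\<forall>x\<in>C. \<forall>x'\<in>C. \<bar>f x - f x'\<bar> \<le> L * (\<Sum>i\<in>UNIV. \<bar>x $ i - x' $ i\<bar>)"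
    and noise_pos: "\<sigma>n > 0"
    and t_pos: "t \<ge> 1"
    and X_len: "length X = t - 1"
    and X_in: "set X \<subseteq> C"
    and Ct_sub: "Ct \<subseteq> C" and Ct_fin: "finite Ct"
    and Ct_card: "real (card Ct) = (L * r * d * (real t)^2) ^ d"
    and \<delta>_range: "0 < \<delta>" "\<delta> < 1"
    and incumbent: "\<xi> = BPMI C \<mu> \<or> \<xi> = BSPMI X \<mu> \<or> \<xi> = BOI ys"
    and event: "\<forall>x\<in>Ct. \<bar>f x - \<mu> x\<bar> \<le> sqrt \<beta> * \<sigma> x"
  shows "\<forall>x\<in>Ct. \<bar>improvement \<xi> (f x) - EI \<xi> (\<mu> x) (\<sigma> x)\<bar> \<le> 1.328 * sqrt \<beta> * \<sigma> x"
proof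
  \<comment> \<open>Only the event, \<open>\<sigma> x > 0\<close> and \<open>\<beta> \<ge> 4\<close> matter: the bound holds for any incumbent and data.\<close>
  fix x assume "x \<in> Ct"
  then have "x \<in> C" using Ct_sub by auto
  have \<sigma>_pos: "0 < \<sigma> x"
    unfolding \<sigma>_def using post_sd_pos[OF k_psd X_in _ \<open>x \<in> C\<close>] k_diag noise_pos \<open>x \<in> C\<close> by simp
  have "1 \<le> real (card Ct)"
    unfolding Ct_card d_def using grid_size_ge_1 r_pos L_ge t_pos by (simp add: d_def)
  then have \<beta>_ge_4: "4 \<le> \<beta>"
    unfolding \<beta>_def using beta_t_ge_4 t_pos \<delta>_range by simp
  then have sqrt_\<beta>: "2 \<le> sqrt \<beta>"
    by (simp add: real_le_rsqrt)
  have "\<bar>improvement \<xi> (f x) - EI \<xi> (\<mu> x) (\<sigma> x)\<bar> \<le> \<bar>f x - \<mu> x\<bar> + \<sigma> x / 2"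
    by (rule abs_improvement_sub_EI_le[OF \<sigma>_pos])
  also have "\<dots> \<le> 5/4 * (sqrt \<beta> * \<sigma> x)"
  proof -
    have "2 * \<sigma> x \<le> sqrt \<beta> * \<sigma> x"
      using mult_right_mono[OF sqrt_\<beta>] \<sigma>_pos by simp
    moreover have "\<bar>f x - \<mu> x\<bar> \<le> sqrt \<beta> * \<sigma> x"
      using event \<open>x \<in> Ct\<close> by blast
    ultimately show ?thesis by linarith
  qed
  also have "\<dots> \<le> 1.328 * (sqrt \<beta> * \<sigma> x)"
    using \<beta>_ge_4 \<sigma>_pos by (intro mult_right_mono mult_nonneg_nonneg) auto
  finally show "\<bar>improvement \<xi> (f x) - EI \<xi> (\<mu> x) (\<sigma> x)\<bar> \<le> 1.328 * sqrt \<beta> * \<sigma> x"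
    by (simp add: mult.assoc)
qed

end
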